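(* Let $B, M \in \mathbb{Z}$ with $M(B^2-4M)\neq 0$. Then every equivalence class (for the relation $\sim$ below) of locally soluble forms in $W^B_M(\mathbb{Q})$ contains exactly one element of $\mathcal{F}^B_M$. In particular, every locally soluble $f=ax^4+Bx^2y^2+cy^4\in W^B_M(\mathbb{Q})$ with $a\in\mathbb{Z}$ and $0\le \operatorname{ord}_p a\le 1$ for all primes $p$ has $c\in\mathbb{Z}$.
   Context: For integers $B,M$, let $W^B_M(\mathbb{Q})$ (resp. $W^B_M(\mathbb{Z})$) be the set of binary quartic forms $f(x,y)=ax^4+Bx^2y^2+cy^4$ with $a,c\in\mathbb{Q}$ (resp. $a,c\in\mathbb{Z}$) and $ac=M$. A form $f$ is called locally soluble if for every place $v$ of $\mathbb{Q}$ (including $v=\infty$, $\mathbb{Q}_\infty=\mathbb{R}$) there exist $x,y,z\in\mathbb{Q}_v$ with $(x,y)\neq(0,0)$ and $z^2=f(x,y)$. Two forms $ax^4+Bx^2y^2+cy^4$ and $a'x^4+Bx^2y^2+c'y^4$ in $W^B_M(\mathbb{Q})$ are equivalent ($\sim$) if $a'=s^2a$ and $c'=s^{-2}c$ for some $s\in\mathbb{Q}^*$. Define $\mathcal{F}^B_M=\{ax^4+Bx^2y^2+cy^4\in W^B_M(\mathbb{Z}) : 0\le \operatorname{ord}_p a\le 1 \text{ for all primes } p\}$. *)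

theory Defs
  imports Complex_Main "HOL-Computational_Algebra.Computational_Algebra"
begin

definition padic_ord :: "nat \<Rightarrow> rat \<Rightarrow> int" where
  "padic_ord p q = (let (n, d) = quotient_of q in
      int (multiplicity (int p) n) - int (multiplicity (int p) d))"

definition padic_abs :: "nat \<Rightarrow> rat \<Rightarrow> real" where
  "padic_abs p q = (if q = 0 then 0 else real p powr (- real_of_int (padic_ord p q)))"

text \<open>Q_p is the completion of Q w.r.t. the p-adic absolute value: its elements are
  classes of p-adic Cauchy sequences of rationals modulo null sequences.\<close>
definition padic_cauchy :: "nat \<Rightarrow> (nat \<Rightarrow> rat) \<Rightarrow> bool" where
  "padic_cauchy p X \<longleftrightarrow> (\<forall>e>0. \<exists>N. \<forall>m\<ge>N. \<forall>n\<ge>N. padic_abs p (X m - X n) < e)"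

definition padic_null :: "nat \<Rightarrow> (nat \<Rightarrow> rat) \<Rightarrow> bool" where
  "padic_null p X \<longleftrightarrow> (\<forall>e>0. \<exists>N. \<forall>n\<ge>N. padic_abs p (X n) < e)"

definition quartic :: "'a::field \<Rightarrow> 'a \<Rightarrow> 'a \<Rightarrow> 'a \<Rightarrow> 'a \<Rightarrow> 'a" where
  "quartic a B c x y = a * x ^ 4 + B * x ^ 2 * y ^ 2 + c * y ^ 4"

definition real_soluble :: "int \<Rightarrow> rat \<Rightarrow> rat \<Rightarrow> bool" where
  "real_soluble B a c \<longleftrightarrow> (\<exists>x y z :: real. (x, y) \<noteq> (0, 0) \<and>
      z ^ 2 = quartic (of_rat a) (of_int B) (of_rat c) x y)"

definition padic_soluble :: "nat \<Rightarrow> int \<Rightarrow> rat \<Rightarrow> rat \<Rightarrow> bool" where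
  "padic_soluble p B a c \<longleftrightarrow> (\<exists>X Y Z :: nat \<Rightarrow> rat.
      padic_cauchy p X \<and> padic_cauchy p Y \<and> padic_cauchy p Z \<and>
      \<not> (padic_null p X \<and> padic_null p Y) \<and>
      padic_null p (\<lambda>n. Z n ^ 2 - quartic a (of_int B) c (X n) (Y n)))"

definition locally_soluble :: "int \<Rightarrow> rat \<Rightarrow> rat \<Rightarrow> bool" where
  "locally_soluble B a c \<longleftrightarrow> real_soluble B a c \<and> (\<forall>p. prime p \<longrightarrow> padic_soluble p B a c)"

text \<open>The form a x^4 + B x^2 y^2 + c y^4 is represented by the pair (a, c).
  W^B_M(Q) = {(a,c) \<in> Q^2. a c = M}.\<close>
definition W_Q :: "int \<Rightarrow> (rat \<times> rat) set" where
  "W_Q M = {(a, c). a * c = of_int M}"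

definition form_equiv :: "rat \<times> rat \<Rightarrow> rat \<times> rat \<Rightarrow> bool" where
  "form_equiv f g \<longleftrightarrow> (\<exists>s::rat. s \<noteq> 0 \<and> fst g = s ^ 2 * fst f \<and> snd g = snd f / s ^ 2)"

definition F_set :: "int \<Rightarrow> (rat \<times> rat) set" where
  "F_set M = {(of_int a, of_int c) | a c :: int. a * c = M \<and>
      (\<forall>p::nat. prime p \<longrightarrow> 0 \<le> padic_ord p (of_int a) \<and> padic_ord p (of_int a) \<le> 1)}"

end

theory Submission
  imports Defs
begin

text \<open>Rescaling by \<open>s\<close> multiplies \<open>a\<close> by the square \<open>s\<^sup>2\<close>, so every class contains a form whose
  leading coefficient \<open>a\<^sub>0\<close> is a squarefree integer, and two such coefficients differ by a square
  of valuation zero at every prime, hence coincide. The content is the integrality of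
  \<open>c\<^sub>0 = M / a\<^sub>0\<close>. If a prime \<open>p\<close> divided its denominator, then \<open>ord\<^sub>p a\<^sub>0 = 1\<close> and
  \<open>ord\<^sub>p c\<^sub>0 = -1\<close>. For \<open>x, y\<close> not both zero the terms \<open>a\<^sub>0 x\<^sup>4\<close> and \<open>c\<^sub>0 y\<^sup>4\<close> then have distinct odd
  valuations and \<open>B x\<^sup>2 y\<^sup>2\<close> has valuation at least their mean, so \<open>f(x, y)\<close> has odd valuation and is
  not a square in \<open>Q\<^sub>p\<close>, contradicting local solubility at \<open>p\<close>.\<close>

lemma rat_obtain_int_fraction:
  fixes x :: rat
  obtains a b :: int where "b > 0" "x = of_int a / of_int b"
  by (cases x) (simp add: Fract_of_int_quotient)

lemma rat_obtain_common_denominator: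
  fixes x y :: rat
  obtains a b d :: int where "d \<noteq> 0" "x = of_int a / of_int d" "y = of_int b / of_int d"
proof -
  obtain a1 d1 where 1: "d1 > 0" "x = of_int a1 / of_int d1" by (rule rat_obtain_int_fraction)
  obtain a2 d2 where 2: "d2 > 0" "y = of_int a2 / of_int d2" by (rule rat_obtain_int_fraction)
  show ?thesis
    by (rule that[of "d1 * d2" "a1 * d2" "a2 * d1"]) (use 1 2 in auto)
qed

lemma padic_ord_of_int: "padic_ord p (of_int a) = int (multiplicity (int p) a)"
  unfolding padic_ord_def by simp

lemma padic_ord_of_int_divide:
  assumes p: "prime p" and a: "a \<noteq> 0" and b: "b \<noteq> 0"
  shows "padic_ord p (of_int a / of_int b) =
           int (multiplicity (int p) a) - int (multiplicity (int p) b)"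
proof -
  obtain n d where q: "quotient_of (of_int a / of_int b) = (n, d)"
    by (cases "quotient_of (of_int a / of_int b :: rat)")
  have eq: "(of_int a / of_int b :: rat) = of_int n / of_int d" by (rule quotient_of_div[OF q])
  have d: "d > 0" by (rule quotient_of_denom_pos[OF q])
  with eq a b have n: "n \<noteq> 0" by auto
  from eq b d have "(of_int (a * d) :: rat) = of_int (n * b)" by (simp add: field_simps)
  then have "multiplicity (int p) (a * d) = multiplicity (int p) (n * b)" by (simp only: of_int_eq_iff)
  with p a b d n have "multiplicity (int p) a + multiplicity (int p) d =
                       multiplicity (int p) n + multiplicity (int p) b"
    by (simp add: prime_elem_multiplicity_mult_distrib)
  then show ?thesis unfolding padic_ord_def q by simp
qed

lemma padic_ord_mult:
  assumes p: "prime p" and x: "x \<noteq> 0" and y: "y \<noteq> 0"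
  shows "padic_ord p (x * y) = padic_ord p x + padic_ord p y"
proof -
  obtain a b where ab: "b > 0" "x = of_int a / of_int b" by (rule rat_obtain_int_fraction)
  obtain c d where cd: "d > 0" "y = of_int c / of_int d" by (rule rat_obtain_int_fraction)
  from ab cd x y have a: "a \<noteq> 0" and c: "c \<noteq> 0" by auto
  have "x * y = of_int (a * c) / of_int (b * d)" using ab cd by simp
  then have "padic_ord p (x * y) =
               int (multiplicity (int p) (a * c)) - int (multiplicity (int p) (b * d))"
    using padic_ord_of_int_divide[OF p, of "a * c" "b * d"] ab cd a c by simp
  then show ?thesis
    using ab cd a c p
    by (simp add: padic_ord_of_int_divide prime_elem_multiplicity_mult_distrib)
qed

lemma padic_ord_power:
  assumes p: "prime p" and x: "x \<noteq> 0"
  shows "padic_ord p (x ^ n) = int n * padic_ord p x"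
  by (induction n) (simp_all add: padic_ord_mult[OF p] x algebra_simps
                                  padic_ord_of_int[of p 1, simplified])

lemma padic_ord_uminus:
  assumes p: "prime p"
  shows "padic_ord p (- x) = padic_ord p x"
proof (cases "x = 0")
  case False
  have "padic_ord p (- x) = padic_ord p (of_int (- 1) * x)" by simp
  also have "\<dots> = padic_ord p x"
    using padic_ord_mult[OF p _ False, of "of_int (- 1)"] padic_ord_of_int[of p "- 1"] by simp
  finally show ?thesis .
qed simp

lemma padic_ord_add_ge_min:
  assumes p: "prime p" and x: "x \<noteq> 0" and y: "y \<noteq> 0" and xy: "x + y \<noteq> 0"
  shows "padic_ord p (x + y) \<ge> min (padic_ord p x) (padic_ord p y)"
proof -
  obtain a b d where abd: "d \<noteq> 0" "x = of_int a / of_int d" "y = of_int b / of_int d"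
    by (rule rat_obtain_common_denominator)
  from abd x y xy have a: "a \<noteq> 0" and b: "b \<noteq> 0" and ab: "a + b \<noteq> 0"
    by (auto simp: add_divide_distrib[symmetric])
  have "x + y = of_int (a + b) / of_int d" using abd by (simp add: add_divide_distrib)
  then have ord_sum: "padic_ord p (x + y) =
                        int (multiplicity (int p) (a + b)) - int (multiplicity (int p) d)"
    using padic_ord_of_int_divide[OF p ab abd(1)] by simp
  let ?k = "min (multiplicity (int p) a) (multiplicity (int p) b)"
  have "int p ^ ?k dvd a + b" by (intro dvd_add multiplicity_dvd') auto
  with ab p have "multiplicity (int p) (a + b) \<ge> ?k"
    by (intro multiplicity_geI) (auto dest: prime_elem_not_unit)
  then show ?thesis
    using ord_sum abd a b p by (simp add: padic_ord_of_int_divide)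
qed

lemma padic_ord_add_dominant:
  assumes p: "prime p" and x: "x \<noteq> 0" and y: "y = 0 \<or> padic_ord p x < padic_ord p y"
  shows "x + y \<noteq> 0 \<and> padic_ord p (x + y) = padic_ord p x"
proof (cases "y = 0")
  case False
  with y have lt: "padic_ord p x < padic_ord p y" by simp
  have xy: "x + y \<noteq> 0"
  proof
    assume "x + y = 0"
    then have "y = - x" by (simp add: eq_neg_iff_add_eq_0)
    with lt show False by (simp add: padic_ord_uminus[OF p])
  qed
  obtain a b d where abd: "d \<noteq> 0" "x = of_int a / of_int d" "y = of_int b / of_int d"
    by (rule rat_obtain_common_denominator)
  from abd x False xy have a: "a \<noteq> 0" and b: "b \<noteq> 0" and ab: "a + b \<noteq> 0"
    by (auto simp: add_divide_distrib[symmetric])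
  have "x + y = of_int (a + b) / of_int d" using abd by (simp add: add_divide_distrib)
  then have ord_sum: "padic_ord p (x + y) =
                        int (multiplicity (int p) (a + b)) - int (multiplicity (int p) d)"
    using padic_ord_of_int_divide[OF p ab abd(1)] by simp
  from lt have "multiplicity (int p) a < multiplicity (int p) b"
    using abd a b p by (simp add: padic_ord_of_int_divide)
  then have "multiplicity (int p) (a + b) = multiplicity (int p) a"
    using a b by (rule multiplicity_sum_lt)
  then show ?thesis
    using xy ord_sum abd a p by (simp add: padic_ord_of_int_divide)
qed (simp add: x)

lemma padic_ord_add3_dominant:
  assumes p: "prime p" and x: "x \<noteq> 0"
    and y: "y = 0 \<or> padic_ord p x < padic_ord p y"
    and z: "z = 0 \<or> padic_ord p x < padic_ord p z"
  shows "x + y + z \<noteq> 0 \<and> padic_ord p (x + y + z) = padic_ord p x"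
proof -
  have "y + z = 0 \<or> padic_ord p x < padic_ord p (y + z)"
    using y z padic_ord_add_ge_min[OF p, of y z] by fastforce
  from padic_ord_add_dominant[OF p x this] show ?thesis by (simp add: add.assoc)
qed

lemma Ints_if_padic_ord_nonneg:
  fixes x :: rat
  assumes nonneg: "\<And>p. prime p \<Longrightarrow> padic_ord p x \<ge> 0"
  shows "x \<in> \<int>"
proof -
  obtain n d where q: "quotient_of x = (n, d)" by (cases "quotient_of x")
  have x: "x = of_int n / of_int d" by (rule quotient_of_div[OF q])
  have d: "d > 0" by (rule quotient_of_denom_pos[OF q])
  have "d = 1"
  proof (rule ccontr)
    assume "d \<noteq> 1"
    with d obtain r where r: "prime r" "r dvd d"
      using prime_divisor_exists[of d] by auto
    define p where "p = nat r"
    have rp: "r = int p" and p: "prime p"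
      using r prime_gt_0_int[OF r(1)] unfolding p_def by auto
    from r quotient_of_coprime[OF q] have "\<not> r dvd n"
      by (meson coprime_common_divisor not_prime_unit)
    then have "multiplicity (int p) n = 0" using rp by (simp add: not_dvd_imp_multiplicity_0)
    moreover have "multiplicity (int p) d > 0"
      using r rp d by (simp add: prime_multiplicity_gt_zero_iff)
    ultimately have "padic_ord p x < 0" unfolding padic_ord_def q by simp
    with nonneg[OF p] show False by simp
  qed
  with x show ?thesis by simp
qed

lemma square_eq_1_if_padic_ord_eq_0:
  fixes x :: rat
  assumes x: "x \<noteq> 0" and zero: "\<And>p. prime p \<Longrightarrow> padic_ord p x = 0"
  shows "x ^ 2 = 1"
proof -
  have "x \<in> \<int>" using zero by (intro Ints_if_padic_ord_nonneg) simp
  then obtain n where n: "x = of_int n" by (auto elim: Ints_cases)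
  have "padic_ord p (1 / x) = 0" if p: "prime p" for p
    using padic_ord_mult[OF p x, of "1 / x"] x zero[OF p]
    by (simp add: padic_ord_of_int[of p 1, simplified])
  then have "1 / x \<in> \<int>" by (intro Ints_if_padic_ord_nonneg) simp
  then obtain m where m: "1 / x = of_int m" by (auto elim: Ints_cases)
  from n m x have "of_int (n * m) = (1 :: rat)" by (simp add: field_simps)
  then have "n * m = 1" by (simp only: of_int_eq_1_iff)
  with n show ?thesis by (auto simp: zmult_eq_1_iff)
qed

lemma padic_abs_add_le_max:
  assumes p: "prime p"
  shows "padic_abs p (x + y) \<le> max (padic_abs p x) (padic_abs p y)"
proof (cases "x = 0 \<or> y = 0 \<or> x + y = 0")
  case False
  then have x: "x \<noteq> 0" and y: "y \<noteq> 0" and xy: "x + y \<noteq> 0" by auto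
  have "real p > 1" using p prime_gt_1_nat by simp
  with padic_ord_add_ge_min[OF p x y xy] x y xy show ?thesis
    by (auto simp: padic_abs_def min_def max_def split: if_splits)
qed (auto simp: padic_abs_def le_max_iff_disj)

lemma padic_cauchy_not_null_imp_padic_ord_bounded:
  assumes p: "prime p" and cauchy: "padic_cauchy p X" and not_null: "\<not> padic_null p X"
  shows "\<exists>L N. \<forall>n\<ge>N. X n \<noteq> 0 \<and> padic_ord p (X n) \<le> L"
proof -
  have p1: "real p > 1" using p prime_gt_1_nat by simp
  from not_null obtain e where e: "e > 0" "\<forall>N. \<exists>n\<ge>N. padic_abs p (X n) \<ge> e"
    unfolding padic_null_def by (auto simp: not_less)
  from cauchy e(1) obtain N where N: "\<forall>m\<ge>N. \<forall>n\<ge>N. padic_abs p (X m - X n) < e"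
    unfolding padic_cauchy_def by blast
  from e(2) obtain n0 where n0: "n0 \<ge> N" "padic_abs p (X n0) \<ge> e" by blast
  have large: "padic_abs p (X n) \<ge> e" if n: "n \<ge> N" for n
  proof -
    have "padic_abs p (X n0) \<le> max (padic_abs p (X n)) (padic_abs p (X n0 - X n))"
      using padic_abs_add_le_max[OF p, of "X n" "X n0 - X n"] by simp
    moreover have "padic_abs p (X n0 - X n) < e" using N n n0 by blast
    ultimately show ?thesis using n0 by linarith
  qed
  have "X n \<noteq> 0 \<and> padic_ord p (X n) \<le> \<lceil>- log (real p) e\<rceil>" if n: "n \<ge> N" for n
  proof
    from large[OF n] e show nz: "X n \<noteq> 0" by (auto simp: padic_abs_def)
    with large[OF n] have "e \<le> real p powr (- real_of_int (padic_ord p (X n)))"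
      by (simp add: padic_abs_def)
    then have "log (real p) e \<le> log (real p) (real p powr - real_of_int (padic_ord p (X n)))"
      using e p1 by (subst log_le_cancel_iff) auto
    then have "log (real p) e \<le> - real_of_int (padic_ord p (X n))"
      using p1 by simp
    then show "padic_ord p (X n) \<le> \<lceil>- log (real p) e\<rceil>" by linarith
  qed
  then show ?thesis by blast
qed

lemma padic_null_imp_eventually_padic_ord_gt:
  assumes p: "prime p" and null: "padic_null p W"
  shows "\<exists>N. \<forall>n\<ge>N. W n = 0 \<or> padic_ord p (W n) > K"
proof -
  have p1: "real p > 1" using p prime_gt_1_nat by simp
  then have "real p powr (- real_of_int K) > 0" by simp
  with null obtain N where N: "\<forall>n\<ge>N. padic_abs p (W n) < real p powr (- real_of_int K)"
    unfolding padic_null_def by blast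
  have "W n = 0 \<or> padic_ord p (W n) > K" if "n \<ge> N" for n
  proof (cases "W n = 0")
    case False
    with N[rule_format, OF that]
    have "real p powr (- real_of_int (padic_ord p (W n))) < real p powr (- real_of_int K)"
      by (simp add: padic_abs_def)
    with p1 show ?thesis by simp
  qed simp
  then show ?thesis by blast
qed

lemma quartic_odd_padic_ord:
  fixes a c x y :: rat and B :: int
  assumes p: "prime p" and a: "a \<noteq> 0" and c: "c \<noteq> 0"
    and odd_a: "odd (padic_ord p a)" and ac: "padic_ord p a + padic_ord p c = 0"
    and xy: "x \<noteq> 0 \<or> y \<noteq> 0"
  defines "T \<equiv> quartic a (of_int B) c x y"
  shows "T \<noteq> 0 \<and> odd (padic_ord p T)
         \<and> (x \<noteq> 0 \<longrightarrow> padic_ord p T \<le> padic_ord p a + 4 * padic_ord p x)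
         \<and> (y \<noteq> 0 \<longrightarrow> padic_ord p T \<le> padic_ord p c + 4 * padic_ord p y)"
proof -
  define u v w where "u = a * x ^ 4" and "v = c * y ^ 4" and "w = of_int B * x ^ 2 * y ^ 2"
  have T: "T = u + v + w" unfolding T_def quartic_def u_def v_def w_def by simp
  have ord_u: "u \<noteq> 0 \<and> padic_ord p u = padic_ord p a + 4 * padic_ord p x" if "x \<noteq> 0"
    using that a padic_ord_mult[OF p] padic_ord_power[OF p] unfolding u_def by simp
  have ord_v: "v \<noteq> 0 \<and> padic_ord p v = padic_ord p c + 4 * padic_ord p y" if "y \<noteq> 0"
    using that c padic_ord_mult[OF p] padic_ord_power[OF p] unfolding v_def by simp
  have odd_u: "odd (padic_ord p u)" if "x \<noteq> 0" using ord_u[OF that] odd_a by simp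
  have odd_v: "odd (padic_ord p v)" if "y \<noteq> 0"
  proof -
    have "padic_ord p c = - padic_ord p a" using ac by simp
    then show ?thesis using ord_v[OF that] odd_a by simp
  qed
  show ?thesis
  proof (cases "x = 0 \<or> y = 0")
    case True
    with xy have "T = u \<and> x \<noteq> 0 \<and> y = 0 \<or> T = v \<and> x = 0 \<and> y \<noteq> 0"
      unfolding T u_def v_def w_def by auto
    then show ?thesis using ord_u ord_v odd_u odd_v by auto
  next
    case False
    then have x: "x \<noteq> 0" and y: "y \<noteq> 0" by auto
    \<comment> \<open>\<open>u\<close> and \<open>v\<close> have odd valuations, so they differ,
      and \<open>w\<close> lies at least half-way between them.\<close>
    have w: "w = 0 \<or> padic_ord p u + padic_ord p v \<le> 2 * padic_ord p w"
    proof (cases "B = 0")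
      case False
      then have "padic_ord p w = padic_ord p (of_int B) + 2 * padic_ord p x + 2 * padic_ord p y"
        using x y padic_ord_mult[OF p] padic_ord_power[OF p] unfolding w_def by simp
      then show ?thesis using ord_u[OF x] ord_v[OF y] ac by (simp add: padic_ord_of_int)
    qed (simp add: w_def)
    have "padic_ord p u \<noteq> padic_ord p v"
    proof
      assume "padic_ord p u = padic_ord p v"
      with ord_u[OF x] ord_v[OF y] ac
      have "padic_ord p a = 2 * (padic_ord p y - padic_ord p x)" by simp
      with odd_a show False by simp
    qed
    then consider "padic_ord p u < padic_ord p v" | "padic_ord p v < padic_ord p u" by linarith
    then show ?thesis
    proof cases
      case 1
      with w have "T \<noteq> 0 \<and> padic_ord p T = padic_ord p u"
        using padic_ord_add3_dominant[OF p, of u v w] ord_u[OF x] ord_v[OF y] unfolding T by auto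
      then show ?thesis using 1 ord_u[OF x] ord_v[OF y] odd_u[OF x] by simp
    next
      case 2
      with w have "T \<noteq> 0 \<and> padic_ord p T = padic_ord p v"
        using padic_ord_add3_dominant[OF p, of v u w] ord_u[OF x] ord_v[OF y] unfolding T
        by (auto simp: add.commute add.left_commute)
      then show ?thesis using 2 ord_u[OF x] ord_v[OF y] odd_v[OF y] by simp
    qed
  qed
qed

lemma square_ne_add_if_odd_padic_ord:
  fixes T W z :: rat
  assumes p: "prime p" and T: "T \<noteq> 0" and odd_T: "odd (padic_ord p T)"
    and W: "W = 0 \<or> padic_ord p T < padic_ord p W"
  shows "z ^ 2 \<noteq> T + W"
proof
  assume z: "z ^ 2 = T + W"
  with padic_ord_add_dominant[OF p T W] have "z \<noteq> 0" "padic_ord p (z ^ 2) = padic_ord p T"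
    by auto
  with odd_T padic_ord_power[OF p, of z 2] show False by simp
qed

text \<open>A point of \<open>Q\<^sub>p\<close> is a Cauchy sequence of rationals, so it suffices to refute the equation
  at a single late index: there one of \<open>x\<^sub>n, y\<^sub>n\<close> has valuation at most a fixed \<open>L\<close>, which bounds the
  odd valuation of \<open>f(x\<^sub>n, y\<^sub>n)\<close> by \<open>|ord\<^sub>p a| + 4 L\<close>, while the error \<open>z\<^sub>n\<^sup>2 - f(x\<^sub>n, y\<^sub>n)\<close> is
  already beyond that bound.\<close>
lemma not_padic_soluble_if_odd_padic_ord:
  assumes p: "prime p" and a: "a \<noteq> 0" and c: "c \<noteq> 0"
    and odd_a: "odd (padic_ord p a)" and ac: "padic_ord p a + padic_ord p c = 0"
  shows "\<not> padic_soluble p B a c"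
proof
  assume "padic_soluble p B a c"
  then obtain X Y Z where X: "padic_cauchy p X" and Y: "padic_cauchy p Y"
    and not_null: "\<not> (padic_null p X \<and> padic_null p Y)"
    and null: "padic_null p (\<lambda>n. Z n ^ 2 - quartic a (of_int B) c (X n) (Y n))"
    unfolding padic_soluble_def by blast
  have "\<exists>L N. \<forall>n\<ge>N. (X n \<noteq> 0 \<and> padic_ord p (X n) \<le> L) \<or> (Y n \<noteq> 0 \<and> padic_ord p (Y n) \<le> L)"
    using not_null padic_cauchy_not_null_imp_padic_ord_bounded[OF p X]
      padic_cauchy_not_null_imp_padic_ord_bounded[OF p Y] by meson
  then obtain L N1 where N1: "\<And>n. n \<ge> N1 \<Longrightarrow>
      (X n \<noteq> 0 \<and> padic_ord p (X n) \<le> L) \<or> (Y n \<noteq> 0 \<and> padic_ord p (Y n) \<le> L)"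
    by blast
  define K where "K = \<bar>padic_ord p a\<bar> + 4 * L"
  obtain N2 where N2: "\<And>n. n \<ge> N2 \<Longrightarrow> Z n ^ 2 - quartic a (of_int B) c (X n) (Y n) = 0
      \<or> padic_ord p (Z n ^ 2 - quartic a (of_int B) c (X n) (Y n)) > K"
    using padic_null_imp_eventually_padic_ord_gt[OF p null, of K] by blast
  define n where "n = max N1 N2"
  define T where "T = quartic a (of_int B) c (X n) (Y n)"
  have small: "X n \<noteq> 0 \<and> padic_ord p (X n) \<le> L \<or> Y n \<noteq> 0 \<and> padic_ord p (Y n) \<le> L"
    using N1[of n] by (simp add: n_def)
  then have T: "T \<noteq> 0 \<and> odd (padic_ord p T) \<and> padic_ord p T \<le> K"
    using quartic_odd_padic_ord[OF p a c odd_a ac, of "X n" "Y n" B] ac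
    unfolding T_def K_def by auto
  with N2[of n] have "Z n ^ 2 - T = 0 \<or> padic_ord p T < padic_ord p (Z n ^ 2 - T)"
    by (force simp: n_def T_def)
  with T square_ne_add_if_odd_padic_ord[OF p, of T "Z n ^ 2 - T" "Z n"] show False
    by auto
qed

lemma squarefree_rescaling:
  fixes a :: rat
  assumes a: "a \<noteq> 0"
  obtains s :: rat and a0 :: int where "s \<noteq> 0" "s ^ 2 * a = of_int a0"
    "\<And>p. prime p \<Longrightarrow> 0 \<le> padic_ord p (of_int a0) \<and> padic_ord p (of_int a0) \<le> 1"
proof -
  obtain n d where nd: "d > 0" "a = of_int n / of_int d" by (rule rat_obtain_int_fraction)
  with a have n: "n \<noteq> 0" by auto
  define r where "r = square_part (n * d)"
  define a0 where "a0 = squarefree_part (n * d)"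
  have nd_decomp: "n * d = a0 * r ^ 2" unfolding a0_def r_def by (rule squarefree_decompose)
  have r: "r \<noteq> 0" using n nd unfolding r_def by simp
  define s where "s = (of_int d / of_int r :: rat)"
  have "s ^ 2 * a = of_int (n * d) / (of_int r) ^ 2"
    using nd r unfolding s_def by (simp add: field_simps power2_eq_square)
  also have "\<dots> = of_int a0" using nd_decomp r by (simp add: field_simps)
  finally have "s ^ 2 * a = of_int a0" .
  moreover have "s \<noteq> 0" using r nd unfolding s_def by simp
  moreover have "multiplicity (int p) a0 \<le> Suc 0" if "prime p" for p
    unfolding a0_def by (rule prime_multiplicity_squarefree_part_le_Suc_0) (use that in simp)
  ultimately show ?thesis using that by (auto simp: padic_ord_of_int)
qed

lemma locally_soluble_rescaled_coeff_in_Ints: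
  fixes a c s :: rat and M B a0 :: int
  assumes ac: "a * c = of_int M" and M: "M \<noteq> 0" and sol: "locally_soluble B a c"
    and s: "s \<noteq> 0" and sa: "s ^ 2 * a = of_int a0"
    and ord_a0: "\<And>p. prime p \<Longrightarrow> padic_ord p (of_int a0) \<le> 1"
  shows "c / s ^ 2 \<in> \<int>"
proof (rule Ints_if_padic_ord_nonneg)
  fix p :: nat
  assume p: "prime p"
  from ac M have a: "a \<noteq> 0" and c: "c \<noteq> 0" by auto
  from sa s a have a0: "(of_int a0 :: rat) \<noteq> 0" by auto
  have "of_int a0 * (c / s ^ 2) = a * c" unfolding sa[symmetric] using s by simp
  then have sum: "padic_ord p (of_int a0) + padic_ord p (c / s ^ 2) = int (multiplicity (int p) M)"
    using padic_ord_mult[OF p a0, of "c / s ^ 2"] c s ac by (simp add: padic_ord_of_int)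
  show "padic_ord p (c / s ^ 2) \<ge> 0"
  proof (rule ccontr)
    assume "\<not> ?thesis"
    with sum ord_a0[OF p] have ord_a0_1: "padic_ord p (of_int a0) = 1"
      and M_coprime: "multiplicity (int p) M = 0" by linarith+
    have "padic_ord p (of_int a0) = 2 * padic_ord p s + padic_ord p a"
      using sa padic_ord_mult[OF p, of "s ^ 2" a] padic_ord_power[OF p s, of 2] s a by simp
    with ord_a0_1 have "odd (padic_ord p a)" by presburger
    moreover have "padic_ord p a + padic_ord p c = 0"
      using padic_ord_mult[OF p a c] ac M_coprime by (simp add: padic_ord_of_int)
    ultimately show False
      using not_padic_soluble_if_odd_padic_ord[OF p a c] sol p unfolding locally_soluble_def by blast
  qed
qed

lemma F_set_equiv_exists:
  assumes ac: "a * c = of_int M" and M: "M \<noteq> 0" and sol: "locally_soluble B a c"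
  shows "\<exists>g. g \<in> F_set M \<and> form_equiv (a, c) g"
proof -
  from ac M have a: "a \<noteq> 0" by auto
  obtain s a0 where s: "s \<noteq> 0" and sa: "s ^ 2 * a = of_int a0"
    and ord_a0: "\<And>p. prime p \<Longrightarrow> 0 \<le> padic_ord p (of_int a0) \<and> padic_ord p (of_int a0) \<le> 1"
    using squarefree_rescaling[OF a] by blast
  have "c / s ^ 2 \<in> \<int>"
    using locally_soluble_rescaled_coeff_in_Ints[OF ac M sol s sa] ord_a0 by blast
  then obtain c0 where c0: "c / s ^ 2 = of_int c0" by (auto elim: Ints_cases)
  have "of_int (a0 * c0) = (s ^ 2 * a) * (c / s ^ 2)" using sa c0 by simp
  also have "\<dots> = of_int M" using s ac by simp
  finally have "a0 * c0 = M" by (simp only: of_int_eq_iff)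
  then have "(of_int a0, of_int c0) \<in> F_set M" using ord_a0 unfolding F_set_def by blast
  moreover have "form_equiv (a, c) (of_int a0, of_int c0)"
    unfolding form_equiv_def using s sa c0 by auto
  ultimately show ?thesis by blast
qed

lemma F_set_equiv_unique:
  assumes a: "a \<noteq> 0"
    and g1: "g1 \<in> F_set M" "form_equiv (a, c) g1" and g2: "g2 \<in> F_set M" "form_equiv (a, c) g2"
  shows "g1 = g2"
proof -
  from g1 obtain a1 c1 where g1_def: "g1 = (of_int a1, of_int c1)" "a1 * c1 = M"
    and ord_a1: "\<And>p. prime p \<Longrightarrow> 0 \<le> padic_ord p (of_int a1) \<and> padic_ord p (of_int a1) \<le> 1"
    unfolding F_set_def by blast
  from g2 obtain a2 c2 where g2_def: "g2 = (of_int a2, of_int c2)" "a2 * c2 = M"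
    and ord_a2: "\<And>p. prime p \<Longrightarrow> 0 \<le> padic_ord p (of_int a2) \<and> padic_ord p (of_int a2) \<le> 1"
    unfolding F_set_def by blast
  from g1 obtain s1 where s1: "s1 \<noteq> 0" "of_int a1 = s1 ^ 2 * a"
    unfolding form_equiv_def g1_def by auto
  from g2 obtain s2 where s2: "s2 \<noteq> 0" "of_int a2 = s2 ^ 2 * a"
    unfolding form_equiv_def g2_def by auto
  define t where "t = s2 / s1"
  have t: "t \<noteq> 0" using s1 s2 unfolding t_def by simp
  have a12: "(of_int a2 :: rat) = t ^ 2 * of_int a1"
    using s1 s2 unfolding t_def by (simp add: field_simps power2_eq_square)
  have a1: "(of_int a1 :: rat) \<noteq> 0" using s1 a by simp
  have "padic_ord p t = 0" if p: "prime p" for p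
  proof -
    have "padic_ord p (of_int a2) = 2 * padic_ord p t + padic_ord p (of_int a1)"
      using a12 padic_ord_mult[OF p, of "t ^ 2" "of_int a1"] padic_ord_power[OF p t, of 2] t a1
      by simp
    with ord_a1[OF p] ord_a2[OF p] show ?thesis by linarith
  qed
  then have "t ^ 2 = 1" by (rule square_eq_1_if_padic_ord_eq_0[OF t])
  with a12 have "a2 = a1" by simp
  moreover from this g1_def g2_def a1 have "c2 = c1" by auto
  ultimately show ?thesis using g1_def g2_def by simp
qed

theorem lemma3p1:
  fixes B M :: int
  assumes "M * (B ^ 2 - 4 * M) \<noteq> 0"
  shows "(\<forall>f \<in> W_Q M. locally_soluble B (fst f) (snd f) \<longrightarrow>
            (\<exists>!g. g \<in> F_set M \<and> form_equiv f g))
       \<and> (\<forall>a c. (a, c) \<in> W_Q M \<and> locally_soluble B a c \<and> a \<in> \<int> \<and>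
            (\<forall>p::nat. prime p \<longrightarrow> 0 \<le> padic_ord p a \<and> padic_ord p a \<le> 1) \<longrightarrow> c \<in> \<int>)"
proof (intro conjI ballI allI impI)
  have M: "M \<noteq> 0" using assms by auto
  fix f
  assume "f \<in> W_Q M" and sol: "locally_soluble B (fst f) (snd f)"
  then obtain a c where f: "f = (a, c)" and ac: "a * c = of_int M"
    by (cases f) (auto simp: W_Q_def)
  with M have "a \<noteq> 0" by auto
  with F_set_equiv_exists[OF ac M] F_set_equiv_unique sol
  show "\<exists>!g. g \<in> F_set M \<and> form_equiv f g" unfolding f by (metis fst_conv snd_conv)
next
  fix a c
  assume H: "(a, c) \<in> W_Q M \<and> locally_soluble B a c \<and> a \<in> \<int> \<and>
            (\<forall>p::nat. prime p \<longrightarrow> 0 \<le> padic_ord p a \<and> padic_ord p a \<le> 1)"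
  then obtain a0 where "a = of_int a0" by (auto elim: Ints_cases)
  with H have "c / 1 ^ 2 \<in> \<int>"
    by (intro locally_soluble_rescaled_coeff_in_Ints[of a c M B 1 a0]) (use assms in \<open>auto simp: W_Q_def\<close>)
  then show "c \<in> \<int>" by simp
qed

end
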